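(* Let $X$ be a topological space with topology $\mathcal T_X$. If there exists a base $\mathcal B$ of $X$ such that the family $\{\mathcal P\in[\mathcal B]^{\le\omega}:\mathcal P\subset_!\mathcal B\}$ contains a club, then the family $\{\mathcal P\in[\mathcal T_X]^{\le\omega}:\mathcal P\subset_!\mathcal T_X\}$ contains a club as well (i.e. $X$ is very I-favorable).
   Context: For a family $\mathcal P$ of open subsets of $X$ contained in a family $\mathcal Q$ of open subsets of $X$, write $\mathcal P\subset_!\mathcal Q$ if for every subfamily $\mathcal S\subset\mathcal P$ and every point $x\notin\operatorname{cl}_X\bigcup\mathcal S$ there exists $W\in\mathcal P$ with $x\in W$ and $W\cap\bigcup\mathcal S=\emptyset$. $[\mathcal Q]^{\le\omega}$ denotes the set of all countable subfamilies of $\mathcal Q$. A family $\mathcal C\subset[\mathcal Q]^{\le\omega}$ is a club if (i) for every increasing sequence $C_1\subset C_2\subset\cdots$ of members of $\mathcal C$, $\bigcup_nC_n\in\mathcal C$, and (ii) every $B\in[\mathcal Q]^{\le\omega}$ is contained in some $C\in\mathcal C$. A space $X$ is very I-favorable if $\{\mathcal P\in[\mathcal T_X]^{\le\omega}:\mathcal P\subset_!\mathcal T_X\}$ contains a club. *)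

theory Defs
  imports "HOL-Analysis.Analysis"
begin

definition opens :: "'a topology \<Rightarrow> 'a set set" where
  "opens X = {U. openin X U}"

definition is_base :: "'a topology \<Rightarrow> 'a set set \<Rightarrow> bool" where
  "is_base X B \<longleftrightarrow> B \<subseteq> opens X \<and>
     (\<forall>U. openin X U \<longrightarrow> (\<exists>S\<subseteq>B. \<Union>S = U))"

definition subset_bang :: "'a topology \<Rightarrow> 'a set set \<Rightarrow> 'a set set \<Rightarrow> bool" where
  "subset_bang X P Q \<longleftrightarrow> P \<subseteq> Q \<and> Q \<subseteq> opens X \<and>
     (\<forall>S\<subseteq>P. \<forall>x\<in>topspace X. x \<notin> X closure_of (\<Union>S) \<longrightarrow>
        (\<exists>W\<in>P. x \<in> W \<and> W \<inter> \<Union>S = {}))"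

definition countable_subfamilies :: "'b set \<Rightarrow> 'b set set" where
  "countable_subfamilies Q = {P. P \<subseteq> Q \<and> countable P}"

definition is_club :: "'b set \<Rightarrow> 'b set set \<Rightarrow> bool" where
  "is_club Q C \<longleftrightarrow> C \<subseteq> countable_subfamilies Q \<and>
     (\<forall>F :: nat \<Rightarrow> 'b set. (\<forall>n. F n \<in> C) \<and> (\<forall>n. F n \<subseteq> F (Suc n)) \<longrightarrow> (\<Union>n. F n) \<in> C) \<and>
     (\<forall>B \<in> countable_subfamilies Q. \<exists>D\<in>C. B \<subseteq> D)"

definition contains_club :: "'b set \<Rightarrow> 'b set set \<Rightarrow> bool" where
  "contains_club Q A \<longleftrightarrow> (\<exists>C. is_club Q C \<and> C \<subseteq> A)"

definition very_I_favorable :: "'a topology \<Rightarrow> bool" where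
  "very_I_favorable X \<longleftrightarrow>
     contains_club (opens X) {P \<in> countable_subfamilies (opens X). subset_bang X P (opens X)}"

end

theory Submission
  imports Defs
begin

(* Let C be a club of countable P \<subseteq> B with P \<subset>_! B.  Call a family Q of
   open sets B-refining if for every W \<in> Q \<inter> B and U \<in> Q meeting W, the set W \<inter> U
   contains a nonempty member of Q \<inter> B.  The club witnessing very I-favourability is
     D = {Q countable family of open sets. Q \<inter> B \<in> C \<and> Q is B-refining}.
   (1) Each Q \<in> D satisfies Q \<subset>_! T_X: given S \<subseteq> Q and x outside cl(\<Union>S), apply
       Q \<inter> B \<subset>_! B to the basic sets of Q lying inside members of S; the W obtained
       misses \<Union>S, since otherwise refinement yields such a basic set inside W.
   (2) D is closed under increasing unions: both conditions are of finite character
       and C is closed under increasing unions.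
   (3) D is unbounded: starting from a countable A, alternately enlarge by a member
       of C and by refining witnesses (which exist since B is a base); the union of
       this countable iteration lies in D. *)

definition refining :: "'a set set \<Rightarrow> 'a set set \<Rightarrow> bool" where
  "refining B Q \<longleftrightarrow>
     (\<forall>W\<in>Q \<inter> B. \<forall>U\<in>Q. W \<inter> U \<noteq> {} \<longrightarrow> (\<exists>V\<in>Q \<inter> B. V \<noteq> {} \<and> V \<subseteq> W \<inter> U))"

lemma club_subset:
  assumes "is_club Q C" "P \<in> C"
  shows "P \<subseteq> Q" "countable P"
  using assms unfolding is_club_def countable_subfamilies_def by auto

lemma club_incseq_Union:
  assumes "is_club Q C" "\<And>n. F n \<in> C" "\<And>n. F n \<subseteq> F (Suc n)"
  shows "(\<Union>n. F n) \<in> C"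
  using assms unfolding is_club_def by simp

lemma club_unbounded:
  assumes "is_club Q C" "A \<subseteq> Q" "countable A"
  obtains P where "P \<in> C" "A \<subseteq> P"
proof -
  have "\<forall>A \<in> countable_subfamilies Q. \<exists>P\<in>C. A \<subseteq> P"
    using assms(1) unfolding is_club_def by (elim conjE)
  moreover have "A \<in> countable_subfamilies Q"
    using assms(2,3) unfolding countable_subfamilies_def by simp
  ultimately show ?thesis using that by blast
qed

lemma incseq_common_member:
  assumes "incseq F" "x \<in> F m" "y \<in> F k"
  shows "x \<in> F (max m k) \<and> y \<in> F (max m k)"
  using assms(2,3) incseqD[OF assms(1), of m "max m k"] incseqD[OF assms(1), of k "max m k"] by auto

lemma subset_bang_of_refining:
  assumes sb: "subset_bang X (Q \<inter> B) B" and Q_open: "Q \<subseteq> opens X" and ref: "refining B Q"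
  shows "subset_bang X Q (opens X)"
proof -
  have "\<exists>W\<in>Q. x \<in> W \<and> W \<inter> \<Union>S = {}"
    if S: "S \<subseteq> Q" and x: "x \<in> topspace X" and nx: "x \<notin> X closure_of \<Union>S" for S x
  proof -
    define S' where "S' = {V \<in> Q \<inter> B. \<exists>U\<in>S. V \<subseteq> U}"
    have "X closure_of \<Union>S' \<subseteq> X closure_of \<Union>S"
      by (rule closure_of_mono) (auto simp: S'_def)
    with nx have "x \<notin> X closure_of \<Union>S'" by blast
    moreover have "S' \<subseteq> Q \<inter> B" by (auto simp: S'_def)
    ultimately obtain W where W: "W \<in> Q \<inter> B" "x \<in> W" "W \<inter> \<Union>S' = {}"
      using sb x unfolding subset_bang_def by meson
    have "W \<inter> \<Union>S = {}"
    proof (rule ccontr)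
      assume "W \<inter> \<Union>S \<noteq> {}"
      then obtain U where U: "U \<in> S" "W \<inter> U \<noteq> {}" by blast
      then obtain V where V: "V \<in> Q \<inter> B" "V \<noteq> {}" "V \<subseteq> W \<inter> U"
        using ref W(1) S unfolding refining_def by blast
      then have "V \<in> S'" using U(1) unfolding S'_def by blast
      then show False using W(3) V(2,3) by blast
    qed
    then show ?thesis using W by blast
  qed
  then show ?thesis using Q_open unfolding subset_bang_def by blast
qed

text \<open>Refinement is preserved by increasing unions, since it concerns only pairs.\<close>
lemma refining_incseq_Union:
  assumes inc: "incseq F" and ref: "\<And>n. refining B (F n)"
  shows "refining B (\<Union>n. F n)"
  unfolding refining_def
proof (intro ballI impI)
  fix W U assume W: "W \<in> (\<Union>n. F n) \<inter> B" and U: "U \<in> (\<Union>n. F n)" and WU: "W \<inter> U \<noteq> {}"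
  then obtain m k where "W \<in> F m" "U \<in> F k" by blast
  then have "W \<in> F (max m k) \<inter> B" "U \<in> F (max m k)"
    using incseq_common_member[OF inc] W by blast+
  then obtain V where "V \<in> F (max m k) \<inter> B" "V \<noteq> {}" "V \<subseteq> W \<inter> U"
    using ref[of "max m k"] WU unfolding refining_def by blast
  then show "\<exists>V\<in>(\<Union>n. F n) \<inter> B. V \<noteq> {} \<and> V \<subseteq> W \<inter> U" by blast
qed

text \<open>R' absorbs R: it contains R, a member of C covering the basic part of R, and
  refining witnesses for all pairs from R.  This is one stage of the construction in (3).\<close>
definition absorbs :: "'a set set \<Rightarrow> 'a set set set \<Rightarrow> 'a set set \<Rightarrow> 'a set set \<Rightarrow> bool" where
  "absorbs B C R R' \<longleftrightarrow> R \<subseteq> R' \<and> (\<exists>P\<in>C. R \<inter> B \<subseteq> P \<and> P \<subseteq> R') \<and>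
     (\<forall>W\<in>R \<inter> B. \<forall>U\<in>R. W \<inter> U \<noteq> {} \<longrightarrow> (\<exists>V\<in>R' \<inter> B. V \<noteq> {} \<and> V \<subseteq> W \<inter> U))"

lemma absorbsD:
  assumes "absorbs B C R R'"
  shows "R \<subseteq> R'" and "\<exists>P\<in>C. R \<inter> B \<subseteq> P \<and> P \<subseteq> R'"
    and "\<And>W U. W \<in> R \<inter> B \<Longrightarrow> U \<in> R \<Longrightarrow> W \<inter> U \<noteq> {} \<Longrightarrow> \<exists>V\<in>R' \<inter> B. V \<noteq> {} \<and> V \<subseteq> W \<inter> U"
  using assms unfolding absorbs_def by auto

lemma base_refines_intersection:
  assumes "is_base X B" "openin X W" "openin X U" "W \<inter> U \<noteq> {}"
  shows "\<exists>V\<in>B. V \<noteq> {} \<and> V \<subseteq> W \<inter> U"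
proof -
  obtain S where S: "S \<subseteq> B" "\<Union>S = W \<inter> U"
    using assms(1-3) unfolding is_base_def by (meson openin_Int)
  then obtain V where "V \<in> S" "V \<noteq> {}" using assms(4) by blast
  then show ?thesis using S by blast
qed

text \<open>Every countable family of open sets is absorbed by another one; the refining
  witnesses are supplied by the base, the covering member by unboundedness of C.\<close>
lemma absorbing_extension:
  assumes base: "is_base X B" and club: "is_club B C"
    and R: "countable R" "R \<subseteq> opens X"
  shows "\<exists>R'. countable R' \<and> R' \<subseteq> opens X \<and> absorbs B C R R'"
proof -
  have B_open: "B \<subseteq> opens X" using base unfolding is_base_def by (elim conjE)
  obtain P where P: "P \<in> C" "R \<inter> B \<subseteq> P"
    using club_unbounded[OF club Int_lower2 countable_Int1[OF R(1)]] .
  have P_sub: "P \<subseteq> B" "countable P" using club_subset[OF club P(1)] by auto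
  define pairs where "pairs = {p \<in> R \<times> R. fst p \<inter> snd p \<noteq> {}}"
  have "\<forall>p\<in>pairs. \<exists>V. V \<in> B \<and> V \<noteq> {} \<and> V \<subseteq> fst p \<inter> snd p"
  proof
    fix p assume p: "p \<in> pairs"
    have "openin X (fst p)" "openin X (snd p)" "fst p \<inter> snd p \<noteq> {}"
      using p R(2) unfolding pairs_def opens_def by auto
    then show "\<exists>V. V \<in> B \<and> V \<noteq> {} \<and> V \<subseteq> fst p \<inter> snd p"
      using base_refines_intersection[OF base] by blast
  qed
  then obtain wit where wit: "\<forall>p\<in>pairs. wit p \<in> B \<and> wit p \<noteq> {} \<and> wit p \<subseteq> fst p \<inter> snd p"
    by (rule bchoice[THEN exE])
  have wit_B: "wit ` pairs \<subseteq> B" using wit by blast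
  have pairs_countable: "countable pairs"
    unfolding pairs_def by (rule countable_subset[OF _ countable_SIGMA[OF R(1) R(1)]]) auto
  define R' where "R' = R \<union> P \<union> wit ` pairs"
  have "countable R'" unfolding R'_def using R(1) P_sub(2) pairs_countable by simp
  moreover have "R' \<subseteq> opens X" unfolding R'_def using R(2) P_sub(1) B_open wit_B by blast
  moreover have "absorbs B C R R'"
    unfolding absorbs_def
  proof (intro conjI ballI impI)
    show "R \<subseteq> R'" "\<exists>P'\<in>C. R \<inter> B \<subseteq> P' \<and> P' \<subseteq> R'" unfolding R'_def using P by blast+
  next
    fix W U assume "W \<in> R \<inter> B" "U \<in> R" "W \<inter> U \<noteq> {}"
    then have WU: "(W, U) \<in> pairs" unfolding pairs_def by simp
    then have "wit (W, U) \<in> B \<and> wit (W, U) \<noteq> {} \<and> wit (W, U) \<subseteq> W \<inter> U"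
      using wit by fastforce
    then show "\<exists>V\<in>R' \<inter> B. V \<noteq> {} \<and> V \<subseteq> W \<inter> U"
      unfolding R'_def using WU by blast
  qed
  ultimately show ?thesis by blast
qed

text \<open>Step (3): iterating absorption \<omega> times, every countable family of open sets lies
  in a countable refining family of open sets whose basic part belongs to C.\<close>
lemma refining_extension:
  assumes base: "is_base X B" and club: "is_club B C"
    and A: "countable A" "A \<subseteq> opens X"
  obtains Q where "countable Q" "Q \<subseteq> opens X" "A \<subseteq> Q" "Q \<inter> B \<in> C" "refining B Q"
proof -
  have "\<forall>R. \<exists>R'. countable R \<and> R \<subseteq> opens X \<longrightarrow>
      countable R' \<and> R' \<subseteq> opens X \<and> absorbs B C R R'"
    using absorbing_extension[OF base club] by blast
  then obtain f where f: "\<forall>R. countable R \<and> R \<subseteq> opens X \<longrightarrow>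
      countable (f R) \<and> f R \<subseteq> opens X \<and> absorbs B C R (f R)"
    by (rule choice[THEN exE])
  define seq where "seq n = (f ^^ n) A" for n
  have seq_Suc: "seq (Suc n) = f (seq n)" for n unfolding seq_def by simp
  have seq_open: "countable (seq n) \<and> seq n \<subseteq> opens X" for n
  proof (induction n)
    case 0 show ?case using A unfolding seq_def by simp
  next
    case (Suc n) then show ?case using f seq_Suc by simp
  qed
  have seq_absorbs: "absorbs B C (seq n) (seq (Suc n))" for n
    using f seq_open seq_Suc by simp
  have inc: "incseq seq" using absorbsD(1)[OF seq_absorbs] by (intro incseq_SucI)
  have "\<forall>n. \<exists>P. P \<in> C \<and> seq n \<inter> B \<subseteq> P \<and> P \<subseteq> seq (Suc n)"
    using absorbsD(2)[OF seq_absorbs] by (simp add: Bex_def)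
  then obtain P where P: "\<forall>n. P n \<in> C \<and> seq n \<inter> B \<subseteq> P n \<and> P n \<subseteq> seq (Suc n)"
    by (rule choice[THEN exE])
  have P_B: "P n \<subseteq> B" for n using club_subset(1)[OF club] P by blast
  let ?Q = "\<Union>n. seq n"
  show thesis
  proof
    show "countable ?Q" "?Q \<subseteq> opens X" using seq_open by auto
    show "A \<subseteq> ?Q" using UN_upper[of 0 UNIV seq] unfolding seq_def by simp
    have "?Q \<inter> B = (\<Union>n. P n)" using P P_B by blast
    also have "\<dots> \<in> C"
    proof (rule club_incseq_Union[OF club])
      show "P n \<in> C" for n using P by blast
      show "P n \<subseteq> P (Suc n)" for n using P P_B by blast
    qed
    finally show "?Q \<inter> B \<in> C" .
    show "refining B ?Q"
      unfolding refining_def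
    proof (intro ballI impI)
      fix W U assume W: "W \<in> ?Q \<inter> B" and U: "U \<in> ?Q" and WU: "W \<inter> U \<noteq> {}"
      then obtain m k where "W \<in> seq m" "U \<in> seq k" by blast
      then have "W \<in> seq (max m k) \<inter> B" "U \<in> seq (max m k)"
        using incseq_common_member[OF inc] W by blast+
      then obtain V where "V \<in> seq (Suc (max m k)) \<inter> B" "V \<noteq> {}" "V \<subseteq> W \<inter> U"
        using absorbsD(3)[OF seq_absorbs] WU by blast
      then show "\<exists>V\<in>?Q \<inter> B. V \<noteq> {} \<and> V \<subseteq> W \<inter> U" by blast
    qed
  qed
qed

lemma refining_club:
  assumes base: "is_base X B" and club: "is_club B C"
  shows "is_club (opens X) {Q \<in> countable_subfamilies (opens X). Q \<inter> B \<in> C \<and> refining B Q}"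
    (is "is_club _ ?D")
  unfolding is_club_def
proof (intro conjI allI impI ballI)
  show "?D \<subseteq> countable_subfamilies (opens X)" by auto
next
  fix F :: "nat \<Rightarrow> 'a set set"
  assume F: "(\<forall>n. F n \<in> ?D) \<and> (\<forall>n. F n \<subseteq> F (Suc n))"
  have inc: "incseq F" using F by (intro incseq_SucI) simp
  have "(\<Union>n. F n) \<inter> B = (\<Union>n. F n \<inter> B)" by auto
  also have "\<dots> \<in> C"
    using F by (intro club_incseq_Union[OF club]) auto
  finally have "(\<Union>n. F n) \<inter> B \<in> C" .
  moreover have "refining B (\<Union>n. F n)" using F by (intro refining_incseq_Union[OF inc]) simp
  moreover have "countable (\<Union>n. F n)" "(\<Union>n. F n) \<subseteq> opens X"
    using F unfolding countable_subfamilies_def by auto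
  ultimately show "(\<Union>n. F n) \<in> ?D" unfolding countable_subfamilies_def by simp
next
  fix A assume "A \<in> countable_subfamilies (opens X)"
  then obtain Q where "countable Q" "Q \<subseteq> opens X" "A \<subseteq> Q" "Q \<inter> B \<in> C" "refining B Q"
    using refining_extension[OF base club] unfolding countable_subfamilies_def by auto
  then show "\<exists>Q\<in>?D. A \<subseteq> Q" unfolding countable_subfamilies_def by auto
qed

theorem proposition2p7:
  fixes X :: "'a topology" and B :: "'a set set"
  assumes "is_base X B"
    and "contains_club B {P \<in> countable_subfamilies B. subset_bang X P B}"
  shows "very_I_favorable X"
proof -
  obtain C where club: "is_club B C"
    and C_bang: "C \<subseteq> {P \<in> countable_subfamilies B. subset_bang X P B}"
    using assms(2) unfolding contains_club_def by blast
  let ?D = "{Q \<in> countable_subfamilies (opens X). Q \<inter> B \<in> C \<and> refining B Q}"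
  have "?D \<subseteq> {Q \<in> countable_subfamilies (opens X). subset_bang X Q (opens X)}"
  proof (intro subsetI CollectI conjI)
    fix Q assume Q: "Q \<in> ?D"
    then show "Q \<in> countable_subfamilies (opens X)" by simp
    have "subset_bang X (Q \<inter> B) B" using Q C_bang by blast
    then show "subset_bang X Q (opens X)"
      using Q by (intro subset_bang_of_refining) (auto simp: countable_subfamilies_def)
  qed
  then show ?thesis
    using refining_club[OF assms(1) club] unfolding very_I_favorable_def contains_club_def by blast
qed

end
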